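(* Let $\gamma_1,\gamma_2,\gamma_3\in\mathbb{R}$ with $\gamma_1,\gamma_2\ge 0$, and let $\mathcal{L}(X)=\frac12\sum_{k=1}^3\gamma_k(\sigma_kX\sigma_k-X)$ on $\mathcal{M}_2$. If $e^{t\mathcal{L}}$ is a unital Schwarz map for every $t\ge 0$, then $\gamma_1+\gamma_2+4\gamma_3\ge 0$. Equivalently, in terms of $\Gamma_1=\gamma_2+\gamma_3$, $\Gamma_2=\gamma_3+\gamma_1$, $\Gamma_3=\gamma_1+\gamma_2$, one has $\Gamma_1+\Gamma_2\ge\frac12\Gamma_3$.
   Context: $\sigma_1,\sigma_2,\sigma_3$ are the Pauli matrices. A unital Schwarz map on $\mathcal{M}_n$ is a linear map $\Phi$ with $\Phi(\mathbb{1})=\mathbb{1}$ and $\Phi(X^\dagger X)\ge\Phi(X)^\dagger\Phi(X)$ for all $X\in\mathcal{M}_n$. Note that $\mathcal{L}$ is self-dual with respect to the Hilbert–Schmidt inner product, i.e. $\mathcal{L}^\ddagger=\mathcal{L}$. *)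

theory Defs
  imports "HOL-Analysis.Analysis"
begin

type_synonym M2 = "complex^2^2"

definition sigma1 :: M2 where
  "sigma1 = vector [vector [0, 1], vector [1, 0]]"
definition sigma2 :: M2 where
  "sigma2 = vector [vector [0, - \<i>], vector [\<i>, 0]]"
definition sigma3 :: M2 where
  "sigma3 = vector [vector [1, 0], vector [0, -1]]"

definition adj :: "M2 \<Rightarrow> M2" where
  "adj A = (\<chi> i j. cnj (A $ j $ i))"

definition csmult :: "complex \<Rightarrow> M2 \<Rightarrow> M2" where
  "csmult c A = (\<chi> i j. c * A $ i $ j)"

definition psd :: "M2 \<Rightarrow> bool" where
  "psd A \<longleftrightarrow> (\<forall>v :: complex^2.
     let q = (\<Sum>i\<in>UNIV. \<Sum>j\<in>UNIV. cnj (v $ i) * A $ i $ j * v $ j)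
     in Im q = 0 \<and> 0 \<le> Re q)"

definition clinear_map :: "(M2 \<Rightarrow> M2) \<Rightarrow> bool" where
  "clinear_map \<Phi> \<longleftrightarrow> (\<forall>X Y. \<Phi> (X + Y) = \<Phi> X + \<Phi> Y) \<and>
                       (\<forall>c X. \<Phi> (csmult c X) = csmult c (\<Phi> X))"

definition unital_schwarz :: "(M2 \<Rightarrow> M2) \<Rightarrow> bool" where
  "unital_schwarz \<Phi> \<longleftrightarrow> clinear_map \<Phi> \<and> \<Phi> (mat 1) = mat 1 \<and>
     (\<forall>X. psd (\<Phi> (adj X ** X) - adj (\<Phi> X) ** \<Phi> X))"

definition exp_map :: "real \<Rightarrow> (M2 \<Rightarrow> M2) \<Rightarrow> M2 \<Rightarrow> M2" where
  "exp_map t L X = (\<Sum>n. (t ^ n / fact n) *\<^sub>R (L ^^ n) X)"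

definition pauliL :: "real \<Rightarrow> real \<Rightarrow> real \<Rightarrow> M2 \<Rightarrow> M2" where
  "pauliL g1 g2 g3 X = (1/2) *\<^sub>R
     (g1 *\<^sub>R (sigma1 ** X ** sigma1 - X) + g2 *\<^sub>R (sigma2 ** X ** sigma2 - X)
      + g3 *\<^sub>R (sigma3 ** X ** sigma3 - X))"

end

theory Submission imports Defs begin

text \<open>The Pauli matrices diagonalise \<open>\<L>\<close>: \<open>\<L> \<sigma>\<^sub>k = -\<Gamma>\<^sub>k \<sigma>\<^sub>k\<close>, so \<open>e\<^sup>t\<^sup>\<L>\<close> multiplies \<open>\<sigma>\<^sub>k\<close> by \<open>e\<^sup>-\<^sup>t\<^sup>\<Gamma>\<^sup>k\<close>.
  Testing the Schwarz inequality at the matrix unit \<open>E\<^sub>1\<^sub>2 = (\<sigma>\<^sub>1 + i\<sigma>\<^sub>2)/2\<close> and reading off its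
  lower right entry gives \<open>f(t) = (1 + e\<^sup>-\<^sup>t\<^sup>\<Gamma>\<^sup>3)/2 - ((e\<^sup>-\<^sup>t\<^sup>\<Gamma>\<^sup>1 + e\<^sup>-\<^sup>t\<^sup>\<Gamma>\<^sup>2)/2)\<^sup>2 \<ge> 0\<close> for \<open>t \<ge> 0\<close>.
  Since \<open>f(0) = 0\<close>, the right derivative \<open>f'(0) = (\<gamma>\<^sub>1 + \<gamma>\<^sub>2)/2 + 2\<gamma>\<^sub>3\<close> must be nonnegative.\<close>

lemmas M2_simps = vec_eq_iff forall_2 matrix_matrix_mult_def sum_2 sigma1_def sigma2_def sigma3_def

lemma pauliL_scaleR: "pauliL g1 g2 g3 (c *\<^sub>R X) = c *\<^sub>R pauliL g1 g2 g3 X"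
  by (simp add: pauliL_def M2_simps algebra_simps)

lemma pauliL_sigma1: "pauliL g1 g2 g3 sigma1 = (-(g2 + g3)) *\<^sub>R sigma1"
  and pauliL_sigma2: "pauliL g1 g2 g3 sigma2 = (-(g3 + g1)) *\<^sub>R sigma2"
  and pauliL_sigma3: "pauliL g1 g2 g3 sigma3 = (-(g1 + g2)) *\<^sub>R sigma3"
  by (simp_all add: pauliL_def M2_simps complex_eq_iff)

lemma funpow_eigenvector:
  fixes L :: "'a::real_vector \<Rightarrow> 'a"
  assumes "\<And>c Y. L (c *\<^sub>R Y) = c *\<^sub>R L Y" and "L X = l *\<^sub>R X"
  shows "(L ^^ n) X = (l ^ n) *\<^sub>R X"
  by (induction n) (simp_all add: assms)

lemma exp_map_eigenvector:
  assumes "\<And>c Y. L (c *\<^sub>R Y) = c *\<^sub>R L Y" and "L X = l *\<^sub>R X"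
  shows "exp_map t L X = exp (t * l) *\<^sub>R X"
proof -
  have coeff: "(\<lambda>n. (t * l) ^ n /\<^sub>R fact n) = (\<lambda>n. t ^ n / fact n * l ^ n)"
    by (auto simp: power_mult_distrib divide_inverse)
  have "exp_map t L X = (\<Sum>n. (t ^ n / fact n * l ^ n) *\<^sub>R X)"
    by (simp add: exp_map_def funpow_eigenvector[OF assms])
  also have "\<dots> = (\<Sum>n. t ^ n / fact n * l ^ n) *\<^sub>R X"
    using summable_exp_generic[of "t * l"] coeff by (simp add: suminf_scaleR_left)
  also have "(\<Sum>n. t ^ n / fact n * l ^ n) = exp (t * l)"
    unfolding exp_def coeff ..
  finally show ?thesis .
qed

lemma psd_diagonal_nonneg:
  assumes "psd A"
  shows "Im (A $ i $ i) = 0 \<and> 0 \<le> Re (A $ i $ i)"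
proof -
  have "(\<Sum>k\<in>UNIV. \<Sum>j\<in>UNIV. cnj (axis i 1 $ k) * A $ k $ j * axis i 1 $ j) = A $ i $ i"
    by (simp add: axis_def if_distrib[of cnj] if_distrib[of "\<lambda>x. x * _"] if_distrib[of "times _"]
        cong: if_cong)
  then show ?thesis
    using assms[unfolded psd_def, rule_format, of "axis i 1"] by (simp only: Let_def)
qed

lemma unital_schwarz_pauli_diagonal_bound:
  fixes a b c :: real
  assumes "unital_schwarz \<Phi>"
    and "\<Phi> sigma1 = a *\<^sub>R sigma1" "\<Phi> sigma2 = b *\<^sub>R sigma2" "\<Phi> sigma3 = c *\<^sub>R sigma3"
  shows "((a + b) / 2)\<^sup>2 \<le> (1 + c) / 2"
proof -
  have add: "\<And>X Y. \<Phi> (X + Y) = \<Phi> X + \<Phi> Y"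
    and smult: "\<And>z X. \<Phi> (csmult z X) = csmult z (\<Phi> X)"
    and unit: "\<Phi> (mat 1) = mat 1"
    and schwarz: "\<And>X. psd (\<Phi> (adj X ** X) - adj (\<Phi> X) ** \<Phi> X)"
    using assms(1) unfolding unital_schwarz_def clinear_map_def by auto
  define E :: M2 where "E = vector [vector [0, 1], vector [0, 0]]"
  have E_pauli: "E = csmult (1/2) (sigma1 + csmult \<i> sigma2)"
    by (simp add: E_def csmult_def M2_simps)
  have EE_pauli: "adj E ** E = csmult (1/2) (mat 1 + csmult (-1) sigma3)"
    by (simp add: E_def adj_def csmult_def M2_simps mat_def)
  have \<Phi>_E: "\<Phi> E = csmult (1/2) (a *\<^sub>R sigma1 + csmult \<i> (b *\<^sub>R sigma2))"
    by (simp add: E_pauli add smult assms(2,3))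
  have \<Phi>_EE: "\<Phi> (adj E ** E) = csmult (1/2) (mat 1 + csmult (-1) (c *\<^sub>R sigma3))"
    by (simp add: EE_pauli add smult unit assms(4))
  have "0 \<le> Re ((\<Phi> (adj E ** E) - adj (\<Phi> E) ** \<Phi> E) $ 2 $ 2)"
    using psd_diagonal_nonneg[OF schwarz] by blast
  also have "(\<Phi> (adj E ** E) - adj (\<Phi> E) ** \<Phi> E) $ 2 $ 2
      = of_real ((1 + c) / 2 - ((a + b) / 2)\<^sup>2)"
    unfolding \<Phi>_E \<Phi>_EE
    by (simp add: adj_def csmult_def M2_simps mat_def power2_eq_square complex_eq_iff)
  finally show ?thesis by simp
qed

lemma has_real_derivative_nonneg_at_right_min:
  fixes f :: "real \<Rightarrow> real"
  assumes "(f has_real_derivative l) (at x)" and "\<And>t. t \<ge> x \<Longrightarrow> f x \<le> f t"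
  shows "0 \<le> l"
proof (rule ccontr)
  assume "\<not> 0 \<le> l"
  then obtain d where "d > 0" and "\<And>h. 0 < h \<Longrightarrow> h < d \<Longrightarrow> f (x + h) < f x"
    using DERIV_neg_dec_right[OF assms(1)] by force
  then have "f (x + d/2) < f x" by simp
  with assms(2)[of "x + d/2"] \<open>d > 0\<close> show False by simp
qed

theorem mainTheorem3:
  fixes g1 g2 g3 :: real
  assumes "g1 \<ge> 0" and "g2 \<ge> 0"
    and "\<forall>t\<ge>0. unital_schwarz (exp_map t (pauliL g1 g2 g3))"
  shows "g1 + g2 + 4 * g3 \<ge> 0 \<and> (g2 + g3) + (g3 + g1) \<ge> (g1 + g2) / 2"
proof -
  define f where "f t = (1 + exp (t * -(g1 + g2))) / 2
      - ((exp (t * -(g2 + g3)) + exp (t * -(g3 + g1))) / 2)\<^sup>2" for t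
  have "0 \<le> f t" if "t \<ge> 0" for t
    unfolding f_def
    using unital_schwarz_pauli_diagonal_bound[OF assms(3)[rule_format, OF that]
        exp_map_eigenvector[OF pauliL_scaleR pauliL_sigma1]
        exp_map_eigenvector[OF pauliL_scaleR pauliL_sigma2]
        exp_map_eigenvector[OF pauliL_scaleR pauliL_sigma3]]
    by simp
  moreover have "f 0 = 0"
    by (simp add: f_def)
  moreover have "(f has_real_derivative (g1 + g2) / 2 + 2 * g3) (at 0)"
    unfolding f_def by (auto intro!: derivative_eq_intros simp: field_simps)
  ultimately have "0 \<le> (g1 + g2) / 2 + 2 * g3"
    by (intro has_real_derivative_nonneg_at_right_min[where f = f and x = 0]) auto
  then show ?thesis by (simp add: field_simps)
qed

end
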